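(* For every agent $i$, atomic terms $t,s,u$, $\theta\in\Theta_K=[0,1]\cap\mathbb{Q}$ and $\eta\in\Theta_V^+=(\tfrac12,1]\cap\mathbb{Q}$, the following formulas are valid (true at every world of every model): \[ K_i^1(t=s)\to\bigl(K_i^\theta(t=u)\leftrightarrow K_i^\theta(s=u)\bigr),\qquad K_i^1(t=s)\to\bigl(Kv_i^\eta(t)\leftrightarrow Kv_i^\eta(s)\bigr). \]
   Context: Fix a countable set $\mathsf{Prop}$ of propositional variables, a countable set $\mathsf{Term}$ of atomic terms, and a finite set of agents $\mathcal{A}=\{1,\dots,n\}$. Let $\Theta_K=[0,1]\cap\mathbb{Q}$ and $\Theta_V^+=(\frac12,1]\cap\mathbb{Q}$. Formulas are generated by $\varphi::= p\mid t=s\mid\neg\varphi\mid(\varphi\to\psi)\mid K_i^\theta\varphi\mid Kv_i^\eta(t)$ with $p\in\mathsf{Prop}$, $t,s\in\mathsf{Term}$, $i\in\mathcal{A}$, $\theta\in\Theta_K$, $\eta\in\Theta_V^+$; $\leftrightarrow$ is a standard abbreviation. A model is $M=(W,D,\{P_i\}_{i\in\mathcal{A}},V,\mathsf{val})$ with $W\neq\emptyset$, $D\neq\emptyset$, $P_i(w)$ a countably additive probability measure on the powerset of $W$ for each $i,w$, $V:W\times\mathsf{Prop}\to\{0,1\}$, $\mathsf{val}:W\times\mathsf{Term}\to D$. Write $\llbracket\varphi\rrbracket^M=\{u\mid M,u\models\varphi\}$ and $\llbracket t=d\rrbracket^M=\{u\mid \mathsf{val}(u,t)=d\}$. Satisfaction: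 $M,w\models p$ iff $V(w,p)=1$; $M,w\models t=s$ iff $\mathsf{val}(w,t)=\mathsf{val}(w,s)$; Boolean clauses as usual; $M,w\models K_i^\theta\varphi$ iff $P_i(w)(\llbracket\varphi\rrbracket^M)\ge\theta$; $M,w\models Kv_i^\eta(t)$ iff there exists a unique $d\in D$ with $P_i(w)(\llbracket t=d\rrbracket^M)\ge\eta$. *)

theory Defs
  imports "HOL-Probability.Probability"
begin

text \<open>Thresholds are rationals; the restriction of K-thresholds to [0,1] and
  Kv-thresholds to (1/2,1] is imposed as hypotheses in the theorem.\<close>

datatype ('p, 't, 'i) form =
    Prop 'p
  | Eq 't 't
  | Neg "('p, 't, 'i) form"
  | Imp "('p, 't, 'i) form" "('p, 't, 'i) form"
  | K 'i rat "('p, 't, 'i) form"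
  | Kv 'i rat 't

definition Iff :: "('p, 't, 'i) form \<Rightarrow> ('p, 't, 'i) form \<Rightarrow> ('p, 't, 'i) form" where
  "Iff \<phi> \<psi> = Neg (Imp (Imp \<phi> \<psi>) (Neg (Imp \<psi> \<phi>)))"

record ('w, 'd, 'p, 't, 'i) model =
  Dom :: "'d set"
  Pr  :: "'i \<Rightarrow> 'w \<Rightarrow> 'w measure"
  Val :: "'w \<Rightarrow> 'p \<Rightarrow> bool"
  tval :: "'w \<Rightarrow> 't \<Rightarrow> 'd"

definition is_model :: "('w, 'd, 'p, 't, 'i) model \<Rightarrow> bool" where
  "is_model M \<longleftrightarrow> Dom M \<noteq> {} \<and>
     (\<forall>w t. tval M w t \<in> Dom M) \<and>
     (\<forall>i w. space (Pr M i w) = UNIV \<and> sets (Pr M i w) = Pow UNIV \<and> prob_space (Pr M i w))"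

fun sat :: "('w, 'd, 'p, 't, 'i) model \<Rightarrow> 'w \<Rightarrow> ('p, 't, 'i) form \<Rightarrow> bool" where
  "sat M w (Prop p) = Val M w p"
| "sat M w (Eq t s) = (tval M w t = tval M w s)"
| "sat M w (Neg \<phi>) = (\<not> sat M w \<phi>)"
| "sat M w (Imp \<phi> \<psi>) = (sat M w \<phi> \<longrightarrow> sat M w \<psi>)"
| "sat M w (K i \<theta> \<phi>) = (measure (Pr M i w) {u. sat M u \<phi>} \<ge> real_of_rat \<theta>)"
| "sat M w (Kv i \<eta> t) =
     (\<exists>!d. d \<in> Dom M \<and> measure (Pr M i w) {u. tval M u t = d} \<ge> real_of_rat \<eta>)"

definition valid :: "('p, 't, 'i) form \<Rightarrow> 'w itself \<Rightarrow> 'd itself \<Rightarrow> bool" where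
  "valid \<phi> _ _ \<longleftrightarrow> (\<forall>(M :: ('w, 'd, 'p, 't, 'i) model) w. is_model M \<longrightarrow> sat M w \<phi>)"

end

theory Submission
  imports Defs
begin

text \<open>If agent i gives probability 1 to t = s, then under P_i(w) the terms t and s
  agree almost surely, so every event described through the value of t has the same
  probability as the event obtained by replacing t with s. This covers both the
  events t = u and, for each d, the events t = d on which Kv depends.\<close>

lemma sat_Iff [simp]: "sat M w (Iff \<phi> \<psi>) \<longleftrightarrow> (sat M w \<phi> \<longleftrightarrow> sat M w \<psi>)"
  by (auto simp: Iff_def)

lemma (in prob_space) prob_eq_if_eq_on_certain_event:
  assumes "E \<in> events" "prob E = 1" "A \<in> events" "B \<in> events"
    and "A \<inter> E = B \<inter> E"
  shows "prob A = prob B"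
proof (rule finite_measure_eq_AE)
  have "AE x in M. x \<in> E"
    using assms(1,2) by (intro AE_prob_1) auto
  then show "AE x in M. x \<in> A \<longleftrightarrow> x \<in> B"
    by eventually_elim (use assms(5) in blast)
qed (use assms(3,4) in auto)

lemma measure_subst_term_if_certain_eq:
  assumes "is_model M" and "sat M w (K i 1 (Eq t s))"
  shows "measure (Pr M i w) {v. Q v (tval M v t)} = measure (Pr M i w) {v. Q v (tval M v s)}"
proof -
  interpret prob_space "Pr M i w"
    using assms(1) by (simp add: is_model_def)
  have sets: "sets (Pr M i w) = Pow UNIV"
    using assms(1) by (simp add: is_model_def)
  have "prob {v. tval M v t = tval M v s} = 1"
    using assms(2) prob_le_1 by (simp add: antisym)
  then show ?thesis
    by (intro prob_eq_if_eq_on_certain_event[where E = "{v. tval M v t = tval M v s}"])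
       (auto simp: sets)
qed

theorem proposition7:
  fixes i :: "'i::finite" and t s u :: "'t::countable" and \<theta> \<eta> :: rat
    and W :: "'w itself" and D :: "'d itself"
  assumes "0 \<le> \<theta>" and "\<theta> \<le> 1" and "1/2 < \<eta>" and "\<eta> \<le> 1"
  shows "valid (Imp (K i 1 (Eq t s)) (Iff (K i \<theta> (Eq t u)) (K i \<theta> (Eq s u)))
           :: ('p::countable, 't, 'i::finite) form) W D
       \<and> valid (Imp (K i 1 (Eq t s)) (Iff (Kv i \<eta> t) (Kv i \<eta> s))
           :: ('p::countable, 't, 'i::finite) form) W D"
  unfolding valid_def sat.simps(4)
proof (intro conjI allI impI)
  fix M :: "('w, 'd, 'p, 't, 'i) model" and w
  assume model: "is_model M" and certain: "sat M w (K i 1 (Eq t s))"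
  note subst = measure_subst_term_if_certain_eq[OF model certain]
  show "sat M w (Iff (K i \<theta> (Eq t u)) (K i \<theta> (Eq s u)))"
    using subst[of "\<lambda>v x. x = tval M v u"] by simp
  show "sat M w (Iff (Kv i \<eta> t) (Kv i \<eta> s))"
    using subst[of "\<lambda>_ x. x = _"] by simp
qed

end
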